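(* Let $A\in\mathbb{R}^{m\times N}$, $K_1,K_{-1}\subseteq[N]$ disjoint, $K=K_1\cup K_{-1}$, $x_\pm=\mathbb{1}_{K_1}-\mathbb{1}_{K_{-1}}$, $0<\rho<1$ and $\tau>0$. The following are equivalent: (i) $A$ satisfies the robust bipolar ternary null space property with constants $\rho,\tau$ relative to $K_{-1},K_1$; (ii) for every $z\in[-1,1]^N$, $|K|-\sum_{i\in K_1}z_i+\sum_{i\in K_{-1}}z_i\le\rho\|z_{K^C}\|_1+\tau\|A(z-x_\pm)\|_2$.
   Context: $\mathbb{1}_S$ has entries $1$ on $S$, $0$ elsewhere; $K^C=[N]\setminus K$; $z_S$ agrees with $z$ on $S$ and is zero elsewhere. $H_{K_1,K_{-1}}=\{w\in\mathbb{R}^N: w_i\le0\text{ for } i\in K_1,\ w_i\ge0 \text{ for } i\in K_{-1}\}$. $A$ satisfies the robust bipolar ternary null space property with constants $\rho,\tau$ relative to $K_{-1},K_1$ if $\sum_{i\in K_{-1}}v_i-\sum_{i\in K_1}v_i\le\rho\sum_{i\in K^C}|v_i|+\tau\|Av\|_2$ for every $v\in H_{K_1,K_{-1}}$. *)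

theory Defs
  imports "HOL-Analysis.Analysis"
begin

text \<open>Vectors in R^N are real^'n (index type 'n finite, N = CARD('n)); matrices
A in R^(m x N) are real^'n^'m. Subsets of [N] are sets of indices of type 'n.\<close>

definition H_set :: "'n::finite set \<Rightarrow> 'n set \<Rightarrow> (real^'n) set" where
  "H_set K1 Km1 = {w. (\<forall>i\<in>K1. w $ i \<le> 0) \<and> (\<forall>i\<in>Km1. w $ i \<ge> 0)}"

definition robust_bipolar_ternary_NSP ::
  "real^'n::finite^'m::finite \<Rightarrow> real \<Rightarrow> real \<Rightarrow> 'n set \<Rightarrow> 'n set \<Rightarrow> bool" where
  "robust_bipolar_ternary_NSP A \<rho> \<tau> Km1 K1 \<longleftrightarrow>
     (\<forall>v\<in>H_set K1 Km1.
        (\<Sum>i\<in>Km1. v $ i) - (\<Sum>i\<in>K1. v $ i)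
          \<le> \<rho> * (\<Sum>i\<in>- (K1 \<union> Km1). \<bar>v $ i\<bar>) + \<tau> * norm (A *v v))"

definition indic_vec :: "'n::finite set \<Rightarrow> real^'n" where
  "indic_vec S = (\<chi> i. if i \<in> S then 1 else 0)"

definition restrict_vec :: "real^'n::finite \<Rightarrow> 'n set \<Rightarrow> real^'n" where
  "restrict_vec z S = (\<chi> i. if i \<in> S then z $ i else 0)"

definition l1norm :: "real^'n::finite \<Rightarrow> real" where
  "l1norm z = (\<Sum>i\<in>UNIV. \<bar>z $ i\<bar>)"

end

theory Submission
  imports Defs
begin

text \<open>Both sides of (ii) are those of the null space inequality at \<open>v = z - x\<^sub>\<plusminus>\<close>: on \<open>K\<close>
  the shift by \<open>x\<^sub>\<plusminus>\<close> produces the constant \<open>|K|\<close>, off \<open>K\<close> it does nothing. As \<open>z\<close> ranges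
  over the cube, \<open>v\<close> ranges over a neighbourhood of \<open>0\<close> in the cone \<open>H\<^sub>K\<^sub>1\<^sub>,\<^sub>K\<^sub>-\<^sub>1\<close>, and
  the null space inequality is positively homogeneous, so holding near \<open>0\<close> in the cone
  is the same as holding on all of it.\<close>

definition nsp_ineq ::
  "real^'n::finite^'m::finite \<Rightarrow> real \<Rightarrow> real \<Rightarrow> 'n set \<Rightarrow> 'n set \<Rightarrow> real^'n \<Rightarrow> bool" where
  "nsp_ineq A \<rho> \<tau> Km1 K1 v \<longleftrightarrow>
     (\<Sum>i\<in>Km1. v $ i) - (\<Sum>i\<in>K1. v $ i)
       \<le> \<rho> * (\<Sum>i\<in>- (K1 \<union> Km1). \<bar>v $ i\<bar>) + \<tau> * norm (A *v v)"

lemma robust_bipolar_ternary_NSP_iff: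
  "robust_bipolar_ternary_NSP A \<rho> \<tau> Km1 K1 \<longleftrightarrow> (\<forall>v\<in>H_set K1 Km1. nsp_ineq A \<rho> \<tau> Km1 K1 v)"
  by (simp add: robust_bipolar_ternary_NSP_def nsp_ineq_def)

lemma nsp_ineq_scaleR:
  assumes "t > 0"
  shows "nsp_ineq A \<rho> \<tau> Km1 K1 (t *\<^sub>R v) \<longleftrightarrow> nsp_ineq A \<rho> \<tau> Km1 K1 v"
proof -
  have "nsp_ineq A \<rho> \<tau> Km1 K1 (t *\<^sub>R v) \<longleftrightarrow>
      t * ((\<Sum>i\<in>Km1. v $ i) - (\<Sum>i\<in>K1. v $ i))
        \<le> t * (\<rho> * (\<Sum>i\<in>- (K1 \<union> Km1). \<bar>v $ i\<bar>) + \<tau> * norm (A *v v))"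
    using assms by (simp add: nsp_ineq_def sum_distrib_left[symmetric] abs_mult
        matrix_vector_mult_scaleR algebra_simps)
  also have "\<dots> \<longleftrightarrow> nsp_ineq A \<rho> \<tau> Km1 K1 v"
    using assms by (simp add: nsp_ineq_def)
  finally show ?thesis .
qed

lemma sum_diff_shift_by_signs:
  fixes z :: "real^'n::finite"
  assumes "K1 \<inter> Km1 = {}"
  shows "(\<Sum>i\<in>Km1. (z - (indic_vec K1 - indic_vec Km1)) $ i)
           - (\<Sum>i\<in>K1. (z - (indic_vec K1 - indic_vec Km1)) $ i)
         = real (card (K1 \<union> Km1)) - (\<Sum>i\<in>K1. z $ i) + (\<Sum>i\<in>Km1. z $ i)"
proof -
  have "(\<Sum>i\<in>Km1. (z - (indic_vec K1 - indic_vec Km1)) $ i) = (\<Sum>i\<in>Km1. z $ i + 1)"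
    "(\<Sum>i\<in>K1. (z - (indic_vec K1 - indic_vec Km1)) $ i) = (\<Sum>i\<in>K1. z $ i - 1)"
    using assms by (auto intro!: sum.cong simp: indic_vec_def)
  moreover have "card (K1 \<union> Km1) = card K1 + card Km1"
    using assms by (simp add: card_Un_disjoint)
  ultimately show ?thesis
    by (simp add: sum.distrib sum_subtractf)
qed

lemma l1norm_restrict_vec:
  "l1norm (restrict_vec z S) = (\<Sum>i\<in>S. \<bar>z $ i\<bar>)"
  by (simp add: l1norm_def restrict_vec_def if_distrib sum.If_cases)

lemma l1norm_restrict_compl_shift_by_signs:
  "l1norm (restrict_vec z (- (K1 \<union> Km1)))
     = (\<Sum>i\<in>- (K1 \<union> Km1). \<bar>(z - (indic_vec K1 - indic_vec Km1)) $ i\<bar>)"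
  by (auto simp: l1norm_restrict_vec indic_vec_def intro!: sum.cong)

lemma ternary_ineq_iff_nsp_ineq:
  fixes z :: "real^'n::finite"
  assumes "K1 \<inter> Km1 = {}"
  shows "(real (card (K1 \<union> Km1)) - (\<Sum>i\<in>K1. z $ i) + (\<Sum>i\<in>Km1. z $ i)
            \<le> \<rho> * l1norm (restrict_vec z (- (K1 \<union> Km1)))
              + \<tau> * norm (A *v (z - (indic_vec K1 - indic_vec Km1))))
         \<longleftrightarrow> nsp_ineq A \<rho> \<tau> Km1 K1 (z - (indic_vec K1 - indic_vec Km1))"
  unfolding nsp_ineq_def sum_diff_shift_by_signs[OF assms]
    l1norm_restrict_compl_shift_by_signs ..

lemma cube_minus_signs_in_H_set:
  fixes z :: "real^'n::finite"
  assumes "K1 \<inter> Km1 = {}" and "\<forall>i. -1 \<le> z $ i \<and> z $ i \<le> 1"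
  shows "z - (indic_vec K1 - indic_vec Km1) \<in> H_set K1 Km1"
  using assms by (auto simp: H_set_def indic_vec_def)

lemma signs_plus_H_set_in_cube:
  fixes v :: "real^'n::finite"
  assumes "K1 \<inter> Km1 = {}" and "v \<in> H_set K1 Km1" and "\<forall>i. \<bar>v $ i\<bar> \<le> 1"
  shows "\<forall>i. -1 \<le> (indic_vec K1 - indic_vec Km1 + v) $ i
               \<and> (indic_vec K1 - indic_vec Km1 + v) $ i \<le> 1"
proof
  fix i
  have bounds: "-1 \<le> v $ i" "v $ i \<le> 1"
    using assms(3) by (simp_all add: abs_le_iff)
  consider "i \<in> K1" "i \<notin> Km1" "v $ i \<le> 0" | "i \<in> Km1" "i \<notin> K1" "0 \<le> v $ i"
    | "i \<notin> K1" "i \<notin> Km1"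
    using assms(1,2) by (auto simp: H_set_def)
  then show "-1 \<le> (indic_vec K1 - indic_vec Km1 + v) $ i
               \<and> (indic_vec K1 - indic_vec Km1 + v) $ i \<le> 1"
    by cases (use bounds in \<open>simp_all add: indic_vec_def\<close>)
qed

lemma exists_pos_scaleR_in_unit_cube:
  fixes v :: "real^'n::finite"
  obtains t :: real where "t > 0" and "\<forall>i. \<bar>(t *\<^sub>R v) $ i\<bar> \<le> 1"
proof
  have "\<bar>v $ i\<bar> \<le> 1 + norm v" for i
    using component_le_norm_cart[of v i] by simp
  then show "\<forall>i. \<bar>(inverse (1 + norm v) *\<^sub>R v) $ i\<bar> \<le> 1"
    by (simp add: abs_mult field_simps add_pos_nonneg)
qed (simp add: add_pos_nonneg)

lemma H_set_scaleR:
  assumes "v \<in> H_set K1 Km1" and "t \<ge> 0"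
  shows "t *\<^sub>R v \<in> H_set K1 Km1"
  using assms by (auto simp: H_set_def mult_nonneg_nonpos)

theorem lemmaA1:
  fixes A :: "real^'n::finite^'m::finite"
    and K1 Km1 :: "'n set" and \<rho> \<tau> :: real
  assumes "K1 \<inter> Km1 = {}"
    and "0 < \<rho>" and "\<rho> < 1" and "0 < \<tau>"
  shows "robust_bipolar_ternary_NSP A \<rho> \<tau> Km1 K1 \<longleftrightarrow>
    (\<forall>z::real^'n. (\<forall>i. -1 \<le> z $ i \<and> z $ i \<le> 1) \<longrightarrow>
       real (card (K1 \<union> Km1)) - (\<Sum>i\<in>K1. z $ i) + (\<Sum>i\<in>Km1. z $ i)
         \<le> \<rho> * l1norm (restrict_vec z (- (K1 \<union> Km1)))
           + \<tau> * norm (A *v (z - (indic_vec K1 - indic_vec Km1))))"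
  unfolding ternary_ineq_iff_nsp_ineq[OF assms(1)] robust_bipolar_ternary_NSP_iff
proof (intro iffI allI impI ballI)
  fix z :: "real^'n"
  assume "\<forall>v\<in>H_set K1 Km1. nsp_ineq A \<rho> \<tau> Km1 K1 v" and "\<forall>i. -1 \<le> z $ i \<and> z $ i \<le> 1"
  then show "nsp_ineq A \<rho> \<tau> Km1 K1 (z - (indic_vec K1 - indic_vec Km1))"
    using cube_minus_signs_in_H_set[OF assms(1)] by blast
next
  fix v :: "real^'n"
  assume cube: "\<forall>z. (\<forall>i. -1 \<le> z $ i \<and> z $ i \<le> 1)
                  \<longrightarrow> nsp_ineq A \<rho> \<tau> Km1 K1 (z - (indic_vec K1 - indic_vec Km1))"
    and v: "v \<in> H_set K1 Km1"
  obtain t where t: "t > 0" "\<forall>i. \<bar>(t *\<^sub>R v) $ i\<bar> \<le> 1"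
    using exists_pos_scaleR_in_unit_cube .
  have "t *\<^sub>R v \<in> H_set K1 Km1"
    using H_set_scaleR[OF v] t(1) by simp
  then have "\<forall>i. -1 \<le> (indic_vec K1 - indic_vec Km1 + t *\<^sub>R v) $ i
                 \<and> (indic_vec K1 - indic_vec Km1 + t *\<^sub>R v) $ i \<le> 1"
    using signs_plus_H_set_in_cube[OF assms(1) _ t(2)] by blast
  then have "nsp_ineq A \<rho> \<tau> Km1 K1 (t *\<^sub>R v)"
    using cube by fastforce
  then show "nsp_ineq A \<rho> \<tau> Km1 K1 v"
    using nsp_ineq_scaleR[OF t(1)] by blast
qed

end
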